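(* There is an absolute constant $c>0$ such that for every $\alpha\in(0,1/2]$ there exist a distribution $\mathcal D$ over $\mathcal X\times\{A,B\}\times\{0,1\}$, a hypothesis class $\mathcal H$ with an optimal Equalized-Odds-constrained classifier $h^*\in\mathcal H$ on $\mathcal D$, and a distribution $\mathcal Q$ such that, with $\widetilde{\mathcal D}=(1-\alpha)\mathcal D+\alpha\mathcal Q$, every (possibly randomized) hypothesis $h$ that satisfies Equalized Odds on $\widetilde{\mathcal D}$ satisfies $\Pr_{\mathcal D}[h(x,z)\ne y]\ge\Pr_{\mathcal D}[h^*(x,z)\ne y]+c$. In words: for a learner maximizing accuracy subject to Equalized Odds, an adversary with corruption fraction $\alpha$ can force an additional $\Omega(1)$ accuracy loss compared with the optimal fair classifier on the true distribution.
   Context: Examples are triples (features $x$, group $z\in\{A,B\}$, label $y\in\{0,1\}$); hypotheses may depend on the group. A hypothesis $h$ satisfies Equalized Odds on a distribution if $\Pr[h=1\mid y=1,z=A]=\Pr[h=1\mid y=1,z=B]$ and $\Pr[h=1\mid y=0,z=A]=\Pr[h=1\mid y=0,z=B]$. $h^*$ minimizes $\Pr_{\mathcal D}[h\ne y]$ over $h\in\mathcal H$ satisfying Equalized Odds on $\mathcal D$. *)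

theory Defs
  imports "HOL-Probability.Probability"
begin

datatype grp = GA | GB

text \<open>A (possibly randomized) hypothesis maps (features, group) to the probability
  of predicting label 1 (True). Deterministic hypotheses take values in {0,1}.\<close>
type_synonym 'x hyp = "'x \<times> grp \<Rightarrow> real"

definition randomized_hyp :: "'x hyp \<Rightarrow> bool" where
  "randomized_hyp h \<longleftrightarrow> (\<forall>p. 0 \<le> h p \<and> h p \<le> 1)"

definition accept_rate :: "('x \<times> grp \<times> bool) pmf \<Rightarrow> 'x hyp \<Rightarrow> bool \<Rightarrow> grp \<Rightarrow> real" where
  "accept_rate D h y z =
     measure_pmf.expectation D (\<lambda>(x, z', y'). if y' = y \<and> z' = z then h (x, z') else 0)
     / measure_pmf.prob D {(x, z', y'). y' = y \<and> z' = z}"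

definition equalized_odds :: "('x \<times> grp \<times> bool) pmf \<Rightarrow> 'x hyp \<Rightarrow> bool" where
  "equalized_odds D h \<longleftrightarrow>
     accept_rate D h True GA = accept_rate D h True GB \<and>
     accept_rate D h False GA = accept_rate D h False GB"

definition err :: "('x \<times> grp \<times> bool) pmf \<Rightarrow> 'x hyp \<Rightarrow> real" where
  "err D h = measure_pmf.expectation D (\<lambda>(x, z, y). if y then 1 - h (x, z) else h (x, z))"

definition optimal_EO :: "'x hyp set \<Rightarrow> ('x \<times> grp \<times> bool) pmf \<Rightarrow> 'x hyp \<Rightarrow> bool" where
  "optimal_EO H D hs \<longleftrightarrow> hs \<in> H \<and> equalized_odds D hs \<and>
     (\<forall>h\<in>H. equalized_odds D h \<longrightarrow> err D hs \<le> err D h)"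

text \<open>(1 - \<alpha>) D + \<alpha> Q.\<close>
definition mixture :: "real \<Rightarrow> 'a pmf \<Rightarrow> 'a pmf \<Rightarrow> 'a pmf" where
  "mixture \<alpha> D Q = bind_pmf (bernoulli_pmf \<alpha>) (\<lambda>b. if b then Q else D)"

end

theory Submission
  imports Defs
begin

(* In the clean distribution the label equals the feature x \<in> {0, 1}; group A is rare (mass \<alpha>/2)
   and group B common (mass 1 - \<alpha>/2 \<ge> 3/4). Predicting x is then fair and error-free.
   The adversary adds mass \<alpha> at the point (x = 1, group A, label 0), which becomes at least half
   of the negatives of group A. Equalized odds on the corrupted distribution therefore forces the
   false-positive rate of group B to be at least half of the common true-positive rate p, so the
   error on group B alone is at least (3/8) (1 - p + p/2) \<ge> 3/16. *)

lemma expectation_on_label_group_eq_sum: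
  fixes D :: "('x \<times> grp \<times> bool) pmf"
  assumes "finite X" "set_pmf D \<subseteq> X \<times> UNIV"
  shows "measure_pmf.expectation D (\<lambda>(x, z', y'). if y' = y \<and> z' = z then f x else 0)
           = (\<Sum>x\<in>X. pmf D (x, z, y) * f x)"
proof -
  have "measure_pmf.expectation D (\<lambda>(x, z', y'). if y' = y \<and> z' = z then f x else 0)
          = (\<Sum>a\<in>(\<lambda>x. (x, z, y)) ` X. (case a of (x, z', y') \<Rightarrow> if y' = y \<and> z' = z then f x else 0) * pmf D a)"
    using assms by (intro integral_measure_pmf_real) (auto split: if_splits prod.splits)
  also have "\<dots> = (\<Sum>x\<in>X. pmf D (x, z, y) * f x)"
    by (subst sum.reindex) (auto simp: inj_on_def mult.commute)
  finally show ?thesis .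
qed

lemma prob_label_group_eq_sum:
  fixes D :: "('x \<times> grp \<times> bool) pmf"
  assumes "finite X" "set_pmf D \<subseteq> X \<times> UNIV"
  shows "measure_pmf.prob D {(x, z', y'). y' = y \<and> z' = z} = (\<Sum>x\<in>X. pmf D (x, z, y))"
proof -
  have "measure_pmf.prob D {(x, z', y'). y' = y \<and> z' = z}
          = measure_pmf.expectation D (indicator {(x, z', y'). y' = y \<and> z' = z})"
    by simp
  also have "indicator {(x, z', y'). y' = y \<and> z' = z}
               = (\<lambda>(x::'x, z', y'). if y' = y \<and> z' = z then 1 else (0::real))"
    by (auto simp: fun_eq_iff)
  finally show ?thesis
    using expectation_on_label_group_eq_sum[OF assms, of y z "\<lambda>_. 1"] by simp
qed

lemma accept_rate_eq_sum:
  fixes D :: "('x \<times> grp \<times> bool) pmf"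
  assumes "finite X" "set_pmf D \<subseteq> X \<times> UNIV"
  shows "accept_rate D h y z = (\<Sum>x\<in>X. pmf D (x, z, y) * h (x, z)) / (\<Sum>x\<in>X. pmf D (x, z, y))"
  unfolding accept_rate_def prob_label_group_eq_sum[OF assms]
  using expectation_on_label_group_eq_sum[OF assms, of y z "\<lambda>x. h (x, z)"]
  by (simp add: case_prod_unfold if_distrib cong: if_cong)

lemma err_eq_sum:
  fixes D :: "('x \<times> grp \<times> bool) pmf"
  assumes "finite X" "set_pmf D \<subseteq> X \<times> UNIV"
  shows "err D h = (\<Sum>x\<in>X. \<Sum>z\<in>{GA, GB}.
                      pmf D (x, z, True) * (1 - h (x, z)) + pmf D (x, z, False) * h (x, z))"
proof -
  have "err D h = (\<Sum>a\<in>X \<times> {GA, GB} \<times> UNIV. (case a of (x, z, y) \<Rightarrow> if y then 1 - h (x, z) else h (x, z)) * pmf D a)"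
    unfolding err_def using assms by (intro integral_measure_pmf_real) (auto intro: grp.exhaust)
  also have "\<dots> = (\<Sum>x\<in>X. \<Sum>(z, y)\<in>{GA, GB} \<times> UNIV. (if y then 1 - h (x, z) else h (x, z)) * pmf D (x, z, y))"
    by (subst sum.cartesian_product) (simp add: case_prod_unfold)
  also have "\<dots> = (\<Sum>x\<in>X. \<Sum>z\<in>{GA, GB}.
                      pmf D (x, z, True) * (1 - h (x, z)) + pmf D (x, z, False) * h (x, z))"
    by (simp add: UNIV_bool algebra_simps)
  finally show ?thesis .
qed

lemma pmf_mixture:
  assumes "0 \<le> \<alpha>" "\<alpha> \<le> 1"
  shows "pmf (mixture \<alpha> D Q) x = (1 - \<alpha>) * pmf D x + \<alpha> * pmf Q x"
  using assms unfolding mixture_def pmf_bind by simp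

lemma set_pmf_mixture: "set_pmf (mixture \<alpha> D Q) \<subseteq> set_pmf D \<union> set_pmf Q"
  unfolding mixture_def by (auto split: if_splits)

lemma half_le_weighted_mean:
  fixes u v s t :: real
  assumes "0 \<le> u" "u \<le> v" "0 < v" "0 \<le> s" "0 \<le> t"
  shows "t / 2 \<le> (u * s + v * t) / (u + v)"
proof -
  have "0 < u + v" using assms by linarith
  moreover have "t * (u + v) \<le> 2 * (u * s + v * t)"
  proof -
    have "u * t \<le> v * t" "0 \<le> u * s"
      using assms by (simp_all add: mult_right_mono)
    then show ?thesis by (simp add: algebra_simps)
  qed
  ultimately show ?thesis by (simp add: field_simps)
qed

definition group_weight :: "real \<Rightarrow> grp \<Rightarrow> real" where
  "group_weight \<alpha> z = (case z of GA \<Rightarrow> \<alpha> / 4 | GB \<Rightarrow> 1 / 2 - \<alpha> / 4)"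

definition clean_dist :: "real \<Rightarrow> (nat \<times> grp \<times> bool) pmf" where
  "clean_dist \<alpha> = pmf_of_list
     [((0, GA, False), \<alpha> / 4), ((1, GA, True), \<alpha> / 4),
      ((0, GB, False), 1 / 2 - \<alpha> / 4), ((1, GB, True), 1 / 2 - \<alpha> / 4)]"

definition poisoned_dist :: "real \<Rightarrow> (nat \<times> grp \<times> bool) pmf" where
  "poisoned_dist \<alpha> = mixture \<alpha> (clean_dist \<alpha>) (return_pmf (1, GA, False))"

definition feature_classifier :: "nat hyp" where
  "feature_classifier = (\<lambda>(x, z). if x = 1 then 1 else 0)"

lemma randomized_hyp_feature_classifier: "randomized_hyp feature_classifier"
  by (simp add: randomized_hyp_def feature_classifier_def)

context
  fixes \<alpha> :: real
  assumes \<alpha>_pos: "0 < \<alpha>" and \<alpha>_le: "\<alpha> \<le> 1 / 2"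
begin

lemma pmf_clean_dist:
  "pmf (clean_dist \<alpha>) (x, z, y) = (if x \<le> 1 \<and> y = (x = 1) then group_weight \<alpha> z else 0)"
proof -
  have "pmf_of_list_wf [((0::nat, GA, False), \<alpha> / 4), ((1, GA, True), \<alpha> / 4),
          ((0, GB, False), 1 / 2 - \<alpha> / 4), ((1, GB, True), 1 / 2 - \<alpha> / 4)]"
    using \<alpha>_pos \<alpha>_le unfolding pmf_of_list_wf_def by auto
  then show ?thesis
    unfolding clean_dist_def group_weight_def
    by (subst pmf_pmf_of_list, assumption) (cases z; cases y; auto)
qed

lemma set_pmf_clean_dist: "set_pmf (clean_dist \<alpha>) \<subseteq> {0, 1} \<times> UNIV"
proof
  fix p
  assume "p \<in> set_pmf (clean_dist \<alpha>)"
  moreover obtain x z y where p: "p = (x, z, y)" by (cases p)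
  ultimately have "x \<le> 1"
    by (simp add: set_pmf_eq pmf_clean_dist split: if_splits)
  then show "p \<in> {0, 1} \<times> UNIV" using p by auto
qed

lemma set_pmf_poisoned_dist: "set_pmf (poisoned_dist \<alpha>) \<subseteq> {0, 1} \<times> UNIV"
  using set_pmf_mixture set_pmf_clean_dist unfolding poisoned_dist_def by fastforce

lemma group_weight_pos: "0 < group_weight \<alpha> z"
  using \<alpha>_pos \<alpha>_le by (cases z) (auto simp: group_weight_def)

lemma prob_clean_dist_label_group_pos:
  "0 < measure_pmf.prob (clean_dist \<alpha>) {(x, z', y'). y' = y \<and> z' = z}"
  using group_weight_pos[of z]
  by (subst prob_label_group_eq_sum[OF _ set_pmf_clean_dist]) (auto simp: pmf_clean_dist)

lemma accept_rate_clean_dist: "accept_rate (clean_dist \<alpha>) h y z = h (of_bool y, z)"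
  using group_weight_pos[of z]
  by (cases y) (simp_all add: accept_rate_eq_sum[OF _ set_pmf_clean_dist] pmf_clean_dist)

lemma err_clean_dist:
  "err (clean_dist \<alpha>) h = \<alpha> / 4 * (1 - h (1, GA) + h (0, GA))
                         + (1 / 2 - \<alpha> / 4) * (1 - h (1, GB) + h (0, GB))"
  by (simp add: err_eq_sum[OF _ set_pmf_clean_dist] pmf_clean_dist group_weight_def field_simps)

lemma pmf_poisoned_dist:
  "pmf (poisoned_dist \<alpha>) p = (1 - \<alpha>) * pmf (clean_dist \<alpha>) p + \<alpha> * of_bool (p = (1, GA, False))"
  using \<alpha>_pos \<alpha>_le unfolding poisoned_dist_def by (auto simp: pmf_mixture indicator_def)

lemma equalized_odds_poisoned_dist_iff:
  "equalized_odds (poisoned_dist \<alpha>) h \<longleftrightarrow>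
     h (1, GA) = h (1, GB) \<and>
     ((1 - \<alpha>) * (\<alpha> / 4) * h (0, GA) + \<alpha> * h (1, GA)) / ((1 - \<alpha>) * (\<alpha> / 4) + \<alpha>) = h (0, GB)"
proof -
  have "0 < 1 - \<alpha>" using \<alpha>_le by simp
  then have "(1 - \<alpha>) * (\<alpha> / 4) \<noteq> 0" "(1 - \<alpha>) * (1 / 2 - \<alpha> / 4) \<noteq> 0"
    using \<alpha>_pos \<alpha>_le by simp_all
  then show ?thesis
    unfolding equalized_odds_def
    by (simp add: accept_rate_eq_sum[OF _ set_pmf_poisoned_dist] pmf_poisoned_dist pmf_clean_dist group_weight_def)
qed

lemma err_clean_dist_ge_if_equalized_odds_poisoned:
  assumes h: "randomized_hyp h" and fair: "equalized_odds (poisoned_dist \<alpha>) h"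
  shows "3 / 16 \<le> err (clean_dist \<alpha>) h"
proof -
  define p where "p = h (1, GB)"
  have range: "0 \<le> h q" "h q \<le> 1" for q
    using h unfolding randomized_hyp_def by blast+
  have tpr: "h (1, GA) = p"
    and fpr: "((1 - \<alpha>) * (\<alpha> / 4) * h (0, GA) + \<alpha> * h (1, GA)) / ((1 - \<alpha>) * (\<alpha> / 4) + \<alpha>) = h (0, GB)"
    using fair unfolding equalized_odds_poisoned_dist_iff p_def by auto
  have "h (1, GA) / 2 \<le> h (0, GB)"
    unfolding fpr[symmetric] using \<alpha>_pos \<alpha>_le range by (intro half_le_weighted_mean) auto
  then have "p / 2 \<le> h (0, GB)"
    using tpr by simp
  have "3 / 16 \<le> (1 / 2 - \<alpha> / 4) * (1 - p / 2)"
    using mult_mono[of "3 / 8" "1 / 2 - \<alpha> / 4" "1 / 2" "1 - p / 2"] \<alpha>_le range[of "(1, GB)"]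
    unfolding p_def by simp
  also have "\<dots> \<le> (1 / 2 - \<alpha> / 4) * (1 - p + h (0, GB))"
    using \<alpha>_le \<open>p / 2 \<le> h (0, GB)\<close> by (intro mult_left_mono) auto
  also have "\<dots> \<le> err (clean_dist \<alpha>) h"
    using \<alpha>_pos range[of "(1, GA)"] range[of "(0, GA)"] unfolding err_clean_dist p_def
    by simp
  finally show ?thesis .
qed

lemma optimal_EO_feature_classifier:
  "optimal_EO {feature_classifier} (clean_dist \<alpha>) feature_classifier"
  by (simp add: optimal_EO_def equalized_odds_def accept_rate_clean_dist feature_classifier_def)

lemma err_feature_classifier: "err (clean_dist \<alpha>) feature_classifier = 0"
  by (simp add: err_clean_dist feature_classifier_def)

end

theorem mainTheorem9:
  shows "\<exists>c::real. c > 0 \<and>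
    (\<forall>\<alpha>::real. 0 < \<alpha> \<and> \<alpha> \<le> 1/2 \<longrightarrow>
      (\<exists>(D :: (nat \<times> grp \<times> bool) pmf) (H :: nat hyp set) hs Q.
          (\<forall>y z. measure_pmf.prob D {(x, z', y'). y' = y \<and> z' = z} > 0) \<and>
          (\<forall>h\<in>H. randomized_hyp h) \<and>
          optimal_EO H D hs \<and>
          (\<forall>h. randomized_hyp h \<and> equalized_odds (mixture \<alpha> D Q) h \<longrightarrow>
               err D h \<ge> err D hs + c)))"
proof (intro exI[of _ "3 / 16"] conjI allI impI)
  fix \<alpha> :: real
  assume "0 < \<alpha> \<and> \<alpha> \<le> 1/2"
  then have \<alpha>: "0 < \<alpha>" "\<alpha> \<le> 1 / 2" by auto
  show "\<exists>(D :: (nat \<times> grp \<times> bool) pmf) H hs Q.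
          (\<forall>y z. measure_pmf.prob D {(x, z', y'). y' = y \<and> z' = z} > 0) \<and>
          (\<forall>h\<in>H. randomized_hyp h) \<and>
          optimal_EO H D hs \<and>
          (\<forall>h. randomized_hyp h \<and> equalized_odds (mixture \<alpha> D Q) h \<longrightarrow>
               err D h \<ge> err D hs + 3 / 16)"
    by (rule exI[of _ "clean_dist \<alpha>"], rule exI[of _ "{feature_classifier}"],
        rule exI[of _ feature_classifier], rule exI[of _ "return_pmf (1, GA, False)"])
      (use prob_clean_dist_label_group_pos[OF \<alpha>] randomized_hyp_feature_classifier
         optimal_EO_feature_classifier[OF \<alpha>] err_feature_classifier[OF \<alpha>]
         err_clean_dist_ge_if_equalized_odds_poisoned[OF \<alpha>] in \<open>auto simp: poisoned_dist_def\<close>)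
qed simp

end
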